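(* Let $d\ge 2$ and $k=d+1$. For $x_1,\ldots,x_{d+1}\in\mathbb R^d$ let $A(x_1,\ldots,x_{d+1})$ be the $d$-dimensional volume of the simplex with vertices $x_1,\ldots,x_{d+1}$. Then the maximizers of $I_{A^2}(\mu)=\int\cdots\int A^2(x_1,\ldots,x_{d+1})\,d\mu(x_1)\cdots d\mu(x_{d+1})$ over $\mu\in\mathcal P^*(\mathbb R^d)$ are exactly the balanced isotropic probability measures on $\mathbb R^d$.
   Context: $\mathcal P^*(\mathbb R^d)$ is the set of Borel probability measures $\mu$ on $\mathbb R^d$ with $\int\|x\|^2\,d\mu(x)=1$. A measure $\mu$ on $\mathbb R^d$ is isotropic if $\int x x^T\,d\mu(x)=\frac1d I_d$, and balanced if $\int x\,d\mu(x)=0$. *)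

theory Defs
  imports "HOL-Analysis.Analysis" "HOL-Probability.Probability"
begin

definition P_star :: "(real^'n) measure set" where
  "P_star = {\<mu>. prob_space \<mu> \<and> sets \<mu> = sets borel \<and>
                (\<integral>\<^sup>+ x. ennreal ((norm x)^2) \<partial>\<mu>) = 1}"

definition isotropic :: "(real^'n) measure \<Rightarrow> bool" where
  "isotropic \<mu> \<longleftrightarrow> (\<forall>i j. integrable \<mu> (\<lambda>x. x$i * x$j) \<and>
      (\<integral>x. x$i * x$j \<partial>\<mu>) = (if i = j then 1 / real CARD('n) else 0))"

definition balanced :: "(real^'n) measure \<Rightarrow> bool" where
  "balanced \<mu> \<longleftrightarrow> integrable \<mu> (\<lambda>x. x) \<and> (\<integral>x. x \<partial>\<mu>) = 0"

definition simplex_vol :: "(nat \<Rightarrow> real^'n) \<Rightarrow> real" where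
  "simplex_vol x = measure lborel (convex hull (x ` {..CARD('n)}))"

definition I_A2 :: "(real^'n) measure \<Rightarrow> ennreal" where
  "I_A2 \<mu> = (\<integral>\<^sup>+ x. ennreal ((simplex_vol x)^2) \<partial>(PiM {..CARD('n)} (\<lambda>_. \<mu>)))"

end

(*
  Writing y' = (1, y) for homogeneous coordinates, d! A(x_0, ..., x_d) = |det (x_0', ..., x_d')|.
  Expanding the squared determinant over pairs of permutations and integrating against the
  product measure, independence gives I_{A^2}(mu) = (d+1)!/(d!)^2 det E[y' y'^T], and a Schur
  complement turns this into (d+1)/d! det Sigma, where Sigma is the covariance matrix of mu.
  For mu in P*, trace Sigma = 1 - |E y|^2 <= 1, so by the spectral theorem and AM-GM
  det Sigma <= (trace Sigma / d)^d <= d^(-d), with equality iff E y = 0 and Sigma = I/d, i.e. iff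
  mu is balanced and isotropic. The uniform distribution on the points +-e_k attains the bound.
*)
theory Submission
  imports Defs
begin

section \<open>Volumes of linear images and of simplices\<close>

lemma measure_permute_coordinates_cbox:
  fixes a b :: "real^'n"
  assumes "p permutes (UNIV :: 'n set)"
  shows "measure lebesgue ((\<lambda>v. \<chi> i. v $ p i) ` cbox a b) = measure lebesgue (cbox a b)"
proof -
  let ?P = "\<lambda>v::real^'n. \<chi> i. v $ p i"
  have image: "?P ` cbox a b = cbox (?P a) (?P b)"
  proof
    show "?P ` cbox a b \<subseteq> cbox (?P a) (?P b)"
      by (auto simp: mem_box_cart)
    show "cbox (?P a) (?P b) \<subseteq> ?P ` cbox a b"
    proof
      fix y assume y: "y \<in> cbox (?P a) (?P b)"
      have "y = ?P (\<chi> i. y $ inv p i)"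
        using permutes_inverses(2)[OF assms] by (simp add: vec_eq_iff)
      moreover have "(\<chi> i. y $ inv p i) \<in> cbox a b"
        using y permutes_inverses(1)[OF assms] by (auto simp: mem_box_cart) (metis)+
      ultimately show "y \<in> ?P ` cbox a b" by blast
    qed
  qed
  moreover have "(\<Prod>i\<in>UNIV. b $ p i - a $ p i) = (\<Prod>i\<in>UNIV. b $ i - a $ i)"
    using prod.permute[OF assms, of "\<lambda>i. b $ i - a $ i"] by (simp add: o_def)
  moreover have "cbox (?P a) (?P b) = {} \<longleftrightarrow> cbox a b = {}"
    by (metis image image_is_empty)
  ultimately show ?thesis
    by (simp add: content_cbox_if_cart)
qed

lemma measure_shear_cbox:
  fixes a b :: "real^'n"
  assumes "m \<noteq> n"
  shows "measure lebesgue ((\<lambda>v. \<chi> i. if i = m then v $ m + v $ n else v $ i) ` cbox a b)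
       = measure lebesgue (cbox a b)"
proof (cases "cbox a b = {}")
  case False
  let ?S = "\<lambda>v::real^'n. \<chi> i. if i = m then v $ m + v $ n else v $ i"
  define t :: "real^'n" where "t = axis n (a $ n)"
  have box: "cbox a b = (+) t ` cbox (a - t) (b - t)"
    using cbox_translation[of t "a - t" "b - t"] by simp
  have "?S ` cbox a b = (+) (?S t) ` ?S ` cbox (a - t) (b - t)"
    unfolding box image_comp by (intro image_cong) (auto simp: vec_eq_iff)
  then have "measure lebesgue (?S ` cbox a b) = measure lebesgue (?S ` cbox (a - t) (b - t))"
    by (simp add: measure_translation)
  also have "\<dots> = measure lebesgue (cbox (a - t) (b - t))"
    using False assms by (intro measure_shear_interval) (auto simp: box t_def)
  also have "\<dots> = measure lebesgue (cbox a b)"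
    by (simp add: box measure_translation)
  finally show ?thesis .
qed simp

lemma det_matrix_swap_coordinates:
  "\<bar>det (matrix (\<lambda>v::real^'n. \<chi> i. v $ Transposition.transpose m n i))\<bar> = 1"
proof -
  have "matrix (\<lambda>v::real^'n. \<chi> i. v $ Transposition.transpose m n i)
      = transpose (\<chi> i. mat 1 $ Transposition.transpose m n i)"
    by (auto simp: vec_eq_iff matrix_def transpose_def mat_def axis_def Transposition.transpose_def)
  then show ?thesis
    by (simp add: det_permute_rows[OF permutes_swap_id] sign_swap_id)
qed

lemma det_matrix_shear:
  assumes "m \<noteq> n"
  shows "det (matrix (\<lambda>v::real^'n. \<chi> i. if i = m then v $ m + v $ n else v $ i)) = 1"
proof -
  have "matrix (\<lambda>v::real^'n. \<chi> i. if i = m then v $ m + v $ n else v $ i)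
      = (\<chi> k. if k = m then row m (mat 1) + 1 *s row n (mat 1) else row k (mat 1))"
    by (auto simp: matrix_def vec_eq_iff row_def mat_def axis_def)
  then show ?thesis
    using det_row_operation[OF assms, of "mat 1" 1] by simp
qed

definition scales_lebesgue_by_det :: "(real^'n \<Rightarrow> real^'n) \<Rightarrow> bool" where
  "scales_lebesgue_by_det f \<longleftrightarrow> (\<forall>S \<in> lmeasurable. f ` S \<in> lmeasurable \<and>
      measure lebesgue (f ` S) = \<bar>det (matrix f)\<bar> * measure lebesgue S)"

lemma scales_lebesgue_by_det_compose:
  fixes f g :: "real^'n \<Rightarrow> real^'n"
  assumes "linear f" "linear g" "scales_lebesgue_by_det f" "scales_lebesgue_by_det g"
  shows "scales_lebesgue_by_det (f \<circ> g)"
  unfolding scales_lebesgue_by_det_def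
proof
  fix S :: "(real^'n) set"
  assume "S \<in> lmeasurable"
  with assms(3,4) have "f ` g ` S \<in> lmeasurable \<and>
      measure lebesgue (f ` g ` S) = \<bar>det (matrix f)\<bar> * \<bar>det (matrix g)\<bar> * measure lebesgue S"
    by (simp add: scales_lebesgue_by_det_def)
  then show "(f \<circ> g) ` S \<in> lmeasurable \<and>
      measure lebesgue ((f \<circ> g) ` S) = \<bar>det (matrix (f \<circ> g))\<bar> * measure lebesgue S"
    by (simp add: image_comp matrix_compose[OF assms(2,1)] det_mul abs_mult)
qed

lemma scales_lebesgue_by_det_if_cbox:
  fixes f :: "real^'n \<Rightarrow> real^'n"
  assumes "linear f"
    and "\<And>a b. measure lebesgue (f ` cbox a b) = \<bar>det (matrix f)\<bar> * measure lebesgue (cbox a b)"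
  shows "scales_lebesgue_by_det f"
  using measure_linear_sufficient[OF assms(1) _ assms(2)] by (simp add: scales_lebesgue_by_det_def)

text \<open>The library's \<open>measure_linear_image\<close> requires the index type to be of class \<open>wellorder\<close>.\<close>

lemma measure_linear_image_finite:
  fixes f :: "real^'n \<Rightarrow> real^'n"
  assumes "linear f" "S \<in> lmeasurable"
  shows "f ` S \<in> lmeasurable \<and> measure lebesgue (f ` S) = \<bar>det (matrix f)\<bar> * measure lebesgue S"
proof -
  have "scales_lebesgue_by_det f"
  proof (rule induct_linear_elementary[OF \<open>linear f\<close>])
    fix f g :: "real^'n \<Rightarrow> real^'n"
    assume "linear f" "linear g" "scales_lebesgue_by_det f" "scales_lebesgue_by_det g"
    then show "scales_lebesgue_by_det (f \<circ> g)"
      by (rule scales_lebesgue_by_det_compose)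
  next
    fix f :: "real^'n \<Rightarrow> real^'n" and i
    assume "linear f" "\<And>x. f x $ i = 0"
    then have "\<not> inj f"
      using linear_injective_imp_surjective by (metis one_neq_zero surjE vec_component)
    then show "scales_lebesgue_by_det f"
      using \<open>linear f\<close> det_nz_iff_inj[OF \<open>linear f\<close>] negligible_linear_singular_image
      by (auto simp: scales_lebesgue_by_det_def negligible_iff_measure)
  next
    fix c :: "'n \<Rightarrow> real"
    show "scales_lebesgue_by_det (\<lambda>x. \<chi> i. c i * x $ i)"
      by (simp add: scales_lebesgue_by_det_def measurable_stretch measure_stretch matrix_def axis_def
          det_diagonal)
  next
    fix m n :: 'n
    have "linear (\<lambda>v::real^'n. \<chi> i. v $ Transposition.transpose m n i)"
      by (rule linearI) (simp_all add: vec_eq_iff)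
    then show "scales_lebesgue_by_det (\<lambda>v. \<chi> i. v $ Transposition.transpose m n i)"
      by (rule scales_lebesgue_by_det_if_cbox)
        (simp add: det_matrix_swap_coordinates measure_permute_coordinates_cbox permutes_swap_id)
  next
    fix m n :: 'n
    assume "m \<noteq> n"
    have "linear (\<lambda>v::real^'n. \<chi> i. if i = m then v $ m + v $ n else v $ i)"
      by (rule linearI) (simp_all add: vec_eq_iff algebra_simps)
    then show "scales_lebesgue_by_det (\<lambda>v. \<chi> i. if i = m then v $ m + v $ n else v $ i)"
      by (rule scales_lebesgue_by_det_if_cbox) (simp add: det_matrix_shear measure_shear_cbox \<open>m \<noteq> n\<close>)
  qed
  with assms(2) show ?thesis
    by (simp add: scales_lebesgue_by_det_def)
qed

lemma measure_convex_hull_simplex: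
  fixes x0 :: "real^'n" and v :: "'n \<Rightarrow> real^'n"
  shows "measure lebesgue (convex hull (insert x0 (range v)))
       = \<bar>det (\<chi> i j. v j $ i - x0 $ i)\<bar> / fact CARD('n)"
proof -
  define M where "M = (\<chi> i j. v j $ i - x0 $ i)"
  define std :: "(real^'n) set" where "std = convex hull (insert 0 Basis)"
  have "compact std"
    unfolding std_def by (intro finite_imp_compact_convex_hull) auto
  have "(+) (- x0) ` (convex hull (insert x0 (range v))) = convex hull ((+) (- x0) ` insert x0 (range v))"
    by (rule convex_hull_translation [symmetric])
  also have "(+) (- x0) ` insert x0 (range v) = (*v) M ` insert 0 Basis"
    by (auto simp: M_def Basis_vec_def image_iff matrix_vector_mult_basis column_def vec_eq_iff)
  also have "convex hull \<dots> = (*v) M ` std"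
    unfolding std_def by (rule convex_hull_linear_image [symmetric]) simp
  finally have "(+) (- x0) ` (convex hull (insert x0 (range v))) = (*v) M ` std" .
  then have "measure lebesgue (convex hull (insert x0 (range v))) = measure lebesgue ((*v) M ` std)"
    by (metis measure_translation)
  also have "\<dots> = \<bar>det M\<bar> * measure lebesgue std"
    using measure_linear_image_finite[of "(*v) M" std] \<open>compact std\<close>
    by (simp add: lmeasurable_compact)
  also have "measure lebesgue std = 1 / fact CARD('n)"
    using \<open>compact std\<close> content_std_simplex[where 'a = "real^'n"]
    by (simp add: std_def measure_completion compact_imp_closed)
  finally show ?thesis
    by (simp add: M_def)
qed

section \<open>Determinants over an index type with an extra point\<close>

lemma permutes_map_option:
  assumes "q permutes (UNIV :: 'n::finite set)"
  shows "map_option q permutes UNIV"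
proof -
  have "inj (map_option q)"
    using assms by (simp add: option.inj_map permutes_inj)
  then show ?thesis
    by (simp add: bij_def finite_UNIV_inj_surj permutes_univ bij_iff[symmetric])
qed

lemma sign_map_option:
  assumes "q permutes (UNIV :: 'n::finite set)"
  shows "sign (map_option q) = sign q"
proof -
  have "map_permutation UNIV Some q = map_option q"
  proof
    fix x :: "'n option"
    show "map_permutation UNIV Some q x = map_option q x"
      by (cases x) (auto simp: map_permutation_apply map_permutation_def)
  qed
  then show ?thesis
    using sign_map_permutation[of Some UNIV q] assms by simp
qed

lemma permutes_fixing_None_eq_map_option:
  "{p. p permutes (UNIV :: 'n::finite option set) \<and> p None = None} = map_option ` {q. q permutes UNIV}"
proof (intro equalityI subsetI)
  fix p :: "'n option \<Rightarrow> 'n option"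
  assume "p \<in> {p. p permutes UNIV \<and> p None = None}"
  then have p: "p permutes UNIV" "p None = None"
    by auto
  then have Some: "p (Some i) \<noteq> None" for i
    using permutes_inj[OF p(1)] unfolding inj_def by (metis option.distinct(1))
  have "p = map_option (\<lambda>i. the (p (Some i)))"
  proof
    fix x show "p x = map_option (\<lambda>i. the (p (Some i))) x"
      using p(2) Some by (cases x) auto
  qed
  moreover have "inj (\<lambda>i. the (p (Some i)))"
  proof (rule injI)
    fix a b assume "the (p (Some a)) = the (p (Some b))"
    then have "p (Some a) = p (Some b)"
      using Some by (metis option.expand)
    then show "a = b"
      using permutes_inj[OF p(1)] by (simp add: inj_eq)
  qed
  then have "(\<lambda>i. the (p (Some i))) permutes UNIV"
    by (simp add: bij_def finite_UNIV_inj_surj permutes_univ bij_iff[symmetric])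
  ultimately show "p \<in> map_option ` {q. q permutes UNIV}"
    by blast
next
  fix p :: "'n option \<Rightarrow> 'n option"
  assume "p \<in> map_option ` {q. q permutes UNIV}"
  then show "p \<in> {p. p permutes UNIV \<and> p None = None}"
    using permutes_map_option by fastforce
qed

lemma det_row_None_axis:
  fixes A :: "'a::comm_ring_1^'n::finite option^'n option"
  assumes "A $ None = axis None 1"
  shows "det A = det (\<chi> i j. A $ Some i $ Some j)"
proof -
  let ?t = "\<lambda>p. of_int (sign p) * (\<Prod>i\<in>UNIV. A $ i $ p i)"
  have prod_option: "(\<Prod>i\<in>UNIV. f i) = f None * (\<Prod>i\<in>UNIV. f (Some i))" for f :: "'n option \<Rightarrow> 'a"
    by (simp add: UNIV_option_conv prod.reindex)
  have "det A = sum ?t {p. p permutes UNIV}"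
    unfolding det_def ..
  \<comment> \<open>a permutation moving \<open>None\<close> picks up the factor \<open>A $ None $ p None = 0\<close>\<close>
  also have "\<dots> = sum ?t {p. p permutes UNIV \<and> p None = None}"
    using assms by (intro sum.mono_neutral_right) (auto simp: prod_option axis_def finite_permutations)
  also have "\<dots> = (\<Sum>q | q permutes UNIV. ?t (map_option q))"
    unfolding permutes_fixing_None_eq_map_option
  proof (rule sum.reindex_cong)
    show "inj_on map_option {q. q permutes (UNIV :: 'n set)}"
      by (rule inj_onI) (metis ext option.inject option.simps(9))
  qed simp_all
  also have "\<dots> = det (\<chi> i j. A $ Some i $ Some j)"
    unfolding det_def using assms
    by (intro sum.cong) (auto simp: sign_map_option prod_option axis_def)
  finally show ?thesis .
qed

lemma det_subtract_multiples_of_column_None: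
  fixes M :: "'a::comm_ring_1^'n::finite option^'n option"
  shows "det (\<chi> i j. if j = None then M $ i $ None else M $ i $ j - c j * M $ i $ None) = det M"
proof -
  define U :: "'a^'n option^'n option"
    where "U = (\<chi> k j. if k = j then 1 else if k = None then - c j else 0)"
  have "(\<chi> i j. if j = None then M $ i $ None else M $ i $ j - c j * M $ i $ None) = M ** U"
    by (auto simp: vec_eq_iff matrix_matrix_mult_def U_def UNIV_option_conv sum.reindex
        if_distrib[of "\<lambda>x. _ * x"] cong: if_cong)
  moreover have "det U = 1"
  proof -
    have "det U = det (\<chi> i j. transpose U $ Some i $ Some j)"
      by (subst det_transpose [symmetric], rule det_row_None_axis)
         (simp add: vec_eq_iff transpose_def U_def axis_def)
    also have "(\<chi> i j. transpose U $ Some i $ Some j) = mat 1"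
      by (simp add: vec_eq_iff transpose_def U_def mat_def)
    finally show ?thesis
      by simp
  qed
  ultimately show ?thesis
    by (simp add: det_mul)
qed

lemma det_eq_Schur_complement_None:
  fixes S :: "'a::comm_ring_1^'n::finite option^'n option"
  assumes "S $ None $ None = 1"
  shows "det S = det (\<chi> i j. S $ Some i $ Some j - S $ Some i $ None * S $ None $ Some j)"
proof -
  have "det S = det (\<chi> i j. if j = None then S $ i $ None else S $ i $ j - S $ None $ j * S $ i $ None)"
    by (rule det_subtract_multiples_of_column_None [symmetric])
  also have "\<dots> = det (\<chi> i j. S $ Some i $ Some j - S $ Some i $ None * S $ None $ Some j)"
    using assms by (subst det_row_None_axis) (auto simp: vec_eq_iff axis_def mult.commute)
  finally show ?thesis .
qed

definition homogeneous :: "'a::one^'n \<Rightarrow> 'a^'n option" where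
  "homogeneous y = (\<chi> i. case i of None \<Rightarrow> 1 | Some k \<Rightarrow> y $ k)"

lemma det_homogeneous_columns:
  fixes w :: "'n::finite option \<Rightarrow> 'a::comm_ring_1^'n"
  shows "det (\<chi> i j. homogeneous (w j) $ i) = det (\<chi> i j. w (Some j) $ i - w None $ i)"
  using det_eq_Schur_complement_None[of "\<chi> i j. homogeneous (w j) $ i"]
  by (simp add: homogeneous_def)

section \<open>Integrating a squared determinant against a product measure\<close>

lemma sum_permutations_sign_prod_permuted_rows:
  fixes S :: "'a::comm_ring_1^'m::finite^'m"
  assumes "p permutes (UNIV :: 'm set)"
  shows "(\<Sum>q | q permutes UNIV. of_int (sign q) * (\<Prod>j\<in>UNIV. S $ p j $ q j)) = of_int (sign p) * det S"
  using det_permute_rows[OF assms, of S] by (simp add: det_def)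

lemma sum_permutations_pairs_eq_fact_det:
  fixes S :: "'a::comm_ring_1^'m::finite^'m"
  shows "(\<Sum>p | p permutes (UNIV :: 'm set). \<Sum>q | q permutes (UNIV :: 'm set).
            of_int (sign p) * of_int (sign q) * (\<Prod>j\<in>UNIV. S $ p j $ q j)) = of_nat (fact CARD('m)) * det S"
proof -
  have "(\<Sum>q | q permutes UNIV. of_int (sign p) * of_int (sign q) * (\<Prod>j\<in>UNIV. S $ p j $ q j)) = det S"
    if "p permutes (UNIV :: 'm set)" for p
  proof -
    have "(\<Sum>q | q permutes UNIV. of_int (sign p) * of_int (sign q) * (\<Prod>j\<in>UNIV. S $ p j $ q j))
        = of_int (sign p) * (of_int (sign p) * det S)"
      using sum_permutations_sign_prod_permuted_rows[OF that, of S]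
      by (simp add: mult.assoc flip: sum_distrib_left)
    also have "\<dots> = det S"
      by (simp flip: mult.assoc of_int_mult add: sign_idempotent)
    finally show ?thesis .
  qed
  then show ?thesis
    by (simp add: card_permutations)
qed

lemma det_square_sum_permutations:
  fixes G :: "'m::finite \<Rightarrow> 'a::comm_ring_1^'m"
  shows "(det (\<chi> i j. G j $ i))\<^sup>2 = (\<Sum>p | p permutes (UNIV :: 'm set). \<Sum>q | q permutes (UNIV :: 'm set).
           of_int (sign p) * of_int (sign q) * (\<Prod>j\<in>UNIV. G j $ p j * G j $ q j))"
proof -
  have expansion: "det (\<chi> i j. G j $ i) = (\<Sum>p | p permutes UNIV. of_int (sign p) * (\<Prod>j\<in>UNIV. G j $ p j))"
    by (subst det_transpose [symmetric]) (simp add: det_def transpose_def)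
  show ?thesis
    unfolding expansion power2_eq_square sum_product
    by (intro sum.cong refl) (simp only: prod.distrib mult_ac)
qed

lemma
  fixes \<mu> :: "'a measure" and g :: "'m::finite \<Rightarrow> 'a \<Rightarrow> real" and c :: "'m \<Rightarrow> 'k"
  assumes "sigma_finite_measure \<mu>" and c: "bij_betw c UNIV K" and integrable_g: "\<And>j. integrable \<mu> (g j)"
  shows integrable_prod_PiM_bij: "integrable (PiM K (\<lambda>_. \<mu>)) (\<lambda>x. \<Prod>j\<in>UNIV. g j (x (c j)))"
    and integral_prod_PiM_bij: "(\<integral>x. (\<Prod>j\<in>UNIV. g j (x (c j))) \<partial>PiM K (\<lambda>_. \<mu>)) = (\<Prod>j\<in>UNIV. \<integral>y. g j y \<partial>\<mu>)"
proof -
  interpret product_sigma_finite "\<lambda>_. \<mu>"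
    using assms(1) by (simp add: product_sigma_finite_def)
  have "finite K"
    using c bij_betw_finite finite_class.finite_UNIV by blast
  define c' where "c' = inv_into UNIV c"
  have c'_c: "c' (c j) = j" for j
    using c by (simp add: c'_def bij_betw_def)
  have reindex: "(\<Prod>j\<in>UNIV. h (c j)) = (\<Prod>k\<in>K. h k)" for h :: "'k \<Rightarrow> real"
    using prod.reindex_bij_betw[OF c] .
  have "(\<lambda>x. \<Prod>j\<in>UNIV. g j (x (c j))) = (\<lambda>x. \<Prod>k\<in>K. g (c' k) (x k))"
    using reindex[of "\<lambda>k. g (c' k) (x k)" for x] by (simp add: c'_c)
  moreover have "(\<Prod>j\<in>UNIV. \<integral>y. g j y \<partial>\<mu>) = (\<Prod>k\<in>K. \<integral>y. g (c' k) y \<partial>\<mu>)"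
    using reindex[of "\<lambda>k. \<integral>y. g (c' k) y \<partial>\<mu>"] by (simp add: c'_c)
  moreover have "integrable (PiM K (\<lambda>_. \<mu>)) (\<lambda>x. \<Prod>k\<in>K. g (c' k) (x k))"
    using \<open>finite K\<close> by (rule product_integrable_prod) (simp add: integrable_g)
  moreover have "(\<integral>x. (\<Prod>k\<in>K. g (c' k) (x k)) \<partial>PiM K (\<lambda>_. \<mu>)) = (\<Prod>k\<in>K. \<integral>y. g (c' k) y \<partial>\<mu>)"
    using \<open>finite K\<close> by (rule product_integral_prod) (simp add: integrable_g)
  ultimately show "integrable (PiM K (\<lambda>_. \<mu>)) (\<lambda>x. \<Prod>j\<in>UNIV. g j (x (c j)))"
    and "(\<integral>x. (\<Prod>j\<in>UNIV. g j (x (c j))) \<partial>PiM K (\<lambda>_. \<mu>)) = (\<Prod>j\<in>UNIV. \<integral>y. g j y \<partial>\<mu>)"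
    by simp_all
qed

lemma
  fixes \<mu> :: "'a measure" and F :: "'a \<Rightarrow> real^'m::finite" and c :: "'m \<Rightarrow> 'k"
  assumes "sigma_finite_measure \<mu>" and c: "bij_betw c UNIV K"
    and integrable_F: "\<And>i j. integrable \<mu> (\<lambda>y. F y $ i * F y $ j)"
  shows integrable_det_square_PiM: "integrable (PiM K (\<lambda>_. \<mu>)) (\<lambda>x. (det (\<chi> i j. F (x (c j)) $ i))\<^sup>2)"
    and integral_det_square_PiM: "(\<integral>x. (det (\<chi> i j. F (x (c j)) $ i))\<^sup>2 \<partial>PiM K (\<lambda>_. \<mu>))
          = fact CARD('m) * det (\<chi> i j. \<integral>y. F y $ i * F y $ j \<partial>\<mu>)"
proof -
  define T where "T p q x = (\<Prod>j\<in>UNIV. F (x (c j)) $ p j * F (x (c j)) $ q j)"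
    for p q :: "'m \<Rightarrow> 'm" and x :: "'k \<Rightarrow> 'a"
  note integrable_T = integrable_prod_PiM_bij[OF assms(1) c integrable_F, folded T_def]
  note integral_T = integral_prod_PiM_bij[OF assms(1) c integrable_F, folded T_def]
  have det_square: "(det (\<chi> i j. F (x (c j)) $ i))\<^sup>2 = (\<Sum>p | p permutes (UNIV :: 'm set).
      \<Sum>q | q permutes (UNIV :: 'm set). of_int (sign p) * of_int (sign q) * T p q x)" for x
    by (subst det_square_sum_permutations) (simp add: T_def)
  show "integrable (PiM K (\<lambda>_. \<mu>)) (\<lambda>x. (det (\<chi> i j. F (x (c j)) $ i))\<^sup>2)"
    unfolding det_square by (intro Bochner_Integration.integrable_sum integrable_mult_right integrable_T)
  have "(\<integral>x. (det (\<chi> i j. F (x (c j)) $ i))\<^sup>2 \<partial>PiM K (\<lambda>_. \<mu>))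
      = (\<Sum>p | p permutes (UNIV :: 'm set). \<Sum>q | q permutes (UNIV :: 'm set).
           of_int (sign p) * of_int (sign q) * (\<integral>x. T p q x \<partial>PiM K (\<lambda>_. \<mu>)))"
    unfolding det_square by (simp add: integral_sum integrable_sum integrable_mult_right integrable_T)
  also have "\<dots> = fact CARD('m) * det (\<chi> i j. \<integral>y. F y $ i * F y $ j \<partial>\<mu>)"
    using sum_permutations_pairs_eq_fact_det[of "\<chi> i j. \<integral>y. F y $ i * F y $ j \<partial>\<mu>"]
    by (simp add: integral_T)
  finally show "(\<integral>x. (det (\<chi> i j. F (x (c j)) $ i))\<^sup>2 \<partial>PiM K (\<lambda>_. \<mu>))
      = fact CARD('m) * det (\<chi> i j. \<integral>y. F y $ i * F y $ j \<partial>\<mu>)" .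
qed

section \<open>The spectral theorem and the determinant-trace inequality\<close>

lemma less_exp_minus_one:
  fixes y :: real
  assumes "y \<noteq> 1"
  shows "y < exp (y - 1)"
proof (cases "y > 0")
  case True
  then have "ln y < y - 1"
    using assms ln_le_minus_one ln_eq_minus_one by (metis order_less_le)
  then show ?thesis
    using True by (metis exp_less_mono exp_ln)
qed (simp add: not_less order_le_less_trans[OF _ exp_gt_zero])

lemma
  fixes y :: "'i \<Rightarrow> real"
  assumes "finite I" and nonneg: "\<And>i. i \<in> I \<Longrightarrow> 0 \<le> y i" and sum: "(\<Sum>i\<in>I. y i) = card I"
  shows prod_le_one_if_sum_eq_card: "(\<Prod>i\<in>I. y i) \<le> 1"
    and prod_eq_one_if_sum_eq_card_imp_one: "(\<Prod>i\<in>I. y i) = 1 \<Longrightarrow> i \<in> I \<Longrightarrow> y i = 1"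
proof -
  have "(\<Prod>i\<in>I. exp (y i - 1)) = 1"
    using sum \<open>finite I\<close> by (simp add: sum_subtractf flip: exp_sum)
  moreover have y_le: "0 \<le> y i \<and> y i \<le> exp (y i - 1)" if "i \<in> I" for i
    using nonneg[OF that] exp_ge_add_one_self[of "y i - 1"] by simp
  ultimately show "(\<Prod>i\<in>I. y i) \<le> 1"
    using prod_mono[of I y "\<lambda>i. exp (y i - 1)"] by simp
  show "y i = 1" if "(\<Prod>i\<in>I. y i) = 1" "i \<in> I"
  proof (rule ccontr)
    assume "y i \<noteq> 1"
    then have "(\<Prod>i\<in>I. y i) < (\<Prod>i\<in>I. exp (y i - 1))"
      using y_le \<open>finite I\<close> \<open>i \<in> I\<close> by (intro prod_mono_strict less_exp_minus_one) auto
    with \<open>(\<Prod>i\<in>I. exp (y i - 1)) = 1\<close> \<open>(\<Prod>i\<in>I. y i) = 1\<close> show False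
      by simp
  qed
qed

lemma
  fixes x :: "'i \<Rightarrow> real"
  assumes "finite I" "I \<noteq> {}" and nonneg: "\<And>i. i \<in> I \<Longrightarrow> 0 \<le> x i"
  defines "a \<equiv> (\<Sum>i\<in>I. x i) / card I"
  shows prod_le_mean_power: "(\<Prod>i\<in>I. x i) \<le> a ^ card I"
    and prod_eq_mean_power_imp_const: "(\<Prod>i\<in>I. x i) = a ^ card I \<Longrightarrow> i \<in> I \<Longrightarrow> x i = a"
proof -
  have "card I > 0"
    using assms(1,2) by (simp add: card_gt_0_iff)
  have "a \<ge> 0"
    using nonneg by (simp add: a_def sum_nonneg)
  have "(\<Prod>i\<in>I. x i) \<le> a ^ card I \<and> ((\<Prod>i\<in>I. x i) = a ^ card I \<longrightarrow> (\<forall>i\<in>I. x i = a))"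
  proof (cases "a = 0")
    case True
    then have "sum x I = 0"
      using \<open>card I > 0\<close> by (simp add: a_def)
    then have "\<forall>i\<in>I. x i = 0"
      using sum_nonneg_eq_0_iff[OF \<open>finite I\<close>] nonneg by blast
    with True \<open>finite I\<close> \<open>I \<noteq> {}\<close> show ?thesis
      by auto
  next
    case False
    with \<open>a \<ge> 0\<close> have "a > 0"
      by simp
    have prod_x: "(\<Prod>i\<in>I. x i) = a ^ card I * (\<Prod>i\<in>I. x i / a)"
      using \<open>a > 0\<close> by (simp add: prod_dividef)
    have "sum x I = a * card I"
      using \<open>card I > 0\<close> by (simp add: a_def)
    then have "(\<Sum>i\<in>I. x i / a) = card I"
      using \<open>a > 0\<close> by (simp flip: sum_divide_distrib)
    moreover have "0 \<le> x i / a" if "i \<in> I" for i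
      using nonneg[OF that] \<open>a > 0\<close> by simp
    ultimately have "(\<Prod>i\<in>I. x i / a) \<le> 1"
      and scaled_eq: "(\<Prod>i\<in>I. x i / a) = 1 \<Longrightarrow> i \<in> I \<Longrightarrow> x i / a = 1" for i
      using prod_le_one_if_sum_eq_card[OF \<open>finite I\<close>, where y = "\<lambda>i. x i / a"]
        prod_eq_one_if_sum_eq_card_imp_one[OF \<open>finite I\<close>, where y = "\<lambda>i. x i / a"] by blast+
    then have "(\<Prod>i\<in>I. x i) \<le> a ^ card I"
      unfolding prod_x using \<open>a > 0\<close> by (simp add: mult_left_le)
    moreover have "x i = a" if "(\<Prod>i\<in>I. x i) = a ^ card I" "i \<in> I" for i
      using scaled_eq[OF _ \<open>i \<in> I\<close>] that(1) \<open>a > 0\<close> unfolding prod_x by simp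
    ultimately show ?thesis
      by blast
  qed
  then show "(\<Prod>i\<in>I. x i) \<le> a ^ card I" "(\<Prod>i\<in>I. x i) = a ^ card I \<Longrightarrow> i \<in> I \<Longrightarrow> x i = a"
    by blast+
qed

lemma symmetric_matrix_inner_commute:
  fixes C :: "real^'n^'n"
  assumes "transpose C = C"
  shows "x \<bullet> (C *v y) = (C *v x) \<bullet> y"
  by (metis assms dot_lmul_matrix vector_transpose_matrix)

lemma linear_coeff_zero_if_quadratic_nonpos:
  fixes a b :: real
  assumes "\<And>t. 2 * t * a + t\<^sup>2 * b \<le> 0"
  shows "a = 0"
proof (rule ccontr)
  assume "a \<noteq> 0"
  define t where "t = a / (\<bar>b\<bar> + 1)"
  have "a * a > 0"
    using \<open>a \<noteq> 0\<close> not_real_square_gt_zero by blast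
  then have "t * a > 0"
    by (simp add: t_def add_nonneg_pos)
  moreover have "t\<^sup>2 * (\<bar>b\<bar> + 1) = t * a"
    by (simp add: t_def power2_eq_square)
  moreover have "t\<^sup>2 * b \<ge> - (t\<^sup>2 * \<bar>b\<bar>)"
    using mult_left_mono[OF abs_ge_minus_self[of b], of "t\<^sup>2"] by simp
  moreover have "t\<^sup>2 \<ge> 0"
    by simp
  ultimately have "2 * (t * a) + t\<^sup>2 * b > 0"
    by (simp only: distrib_left mult_1_right)
  with assms[of t] show False
    by (simp add: mult.assoc)
qed

lemma symmetric_matrix_Rayleigh_maximizer_eigenvector:
  fixes C :: "real^'n^'n"
  assumes C: "transpose C = C" and V: "subspace V" and invariant: "\<And>v. v \<in> V \<Longrightarrow> C *v v \<in> V"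
    and "u \<in> V" "u \<bullet> u = 1" and max: "\<And>w. w \<in> V \<Longrightarrow> w \<bullet> (C *v w) \<le> (u \<bullet> (C *v u)) * (w \<bullet> w)"
  shows "C *v u = (u \<bullet> (C *v u)) *\<^sub>R u"
proof -
  define l where "l = u \<bullet> (C *v u)"
  \<comment> \<open>along \<open>u + t v\<close> the defect \<open>w \<bullet> C w - l (w \<bullet> w)\<close> is a quadratic in \<open>t\<close> that is maximal at \<open>t = 0\<close>\<close>
  have orthogonal_to_u: "v \<bullet> (C *v u) = 0" if "v \<in> V" "v \<bullet> u = 0" for v
  proof (rule linear_coeff_zero_if_quadratic_nonpos[where b = "v \<bullet> (C *v v) - l * (v \<bullet> v)"])
    fix t :: real
    have "u + t *\<^sub>R v \<in> V"
      using \<open>u \<in> V\<close> \<open>v \<in> V\<close> V by (simp add: subspace_add subspace_scale)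
    moreover have "(u + t *\<^sub>R v) \<bullet> (C *v (u + t *\<^sub>R v)) = l + 2 * t * (v \<bullet> (C *v u)) + t\<^sup>2 * (v \<bullet> (C *v v))"
      using symmetric_matrix_inner_commute[OF C, of u v]
      by (simp add: l_def matrix_vector_right_distrib matrix_vector_mult_scaleR inner_add_left
          inner_add_right inner_commute algebra_simps power2_eq_square)
    moreover have "(u + t *\<^sub>R v) \<bullet> (u + t *\<^sub>R v) = 1 + t\<^sup>2 * (v \<bullet> v)"
      using \<open>u \<bullet> u = 1\<close> \<open>v \<bullet> u = 0\<close>
      by (simp add: inner_add_left inner_add_right inner_commute algebra_simps power2_eq_square)
    ultimately show "2 * t * (v \<bullet> (C *v u)) + t\<^sup>2 * (v \<bullet> (C *v v) - l * (v \<bullet> v)) \<le> 0"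
      using max[of "u + t *\<^sub>R v"] by (simp add: l_def algebra_simps)
  qed
  define w where "w = C *v u - l *\<^sub>R u"
  have "w \<in> V"
    unfolding w_def using invariant \<open>u \<in> V\<close> V by (simp add: subspace_diff subspace_scale)
  moreover have "w \<bullet> u = 0"
    using \<open>u \<bullet> u = 1\<close> by (simp add: w_def l_def inner_diff_left inner_diff_right inner_commute)
  ultimately have "w \<bullet> (C *v u) = 0"
    by (rule orthogonal_to_u)
  with \<open>w \<bullet> u = 0\<close> have "w \<bullet> w = 0"
    by (simp add: w_def inner_diff_right)
  then show ?thesis
    by (simp add: w_def l_def)
qed

lemma symmetric_matrix_unit_eigenvector:
  fixes C :: "real^'n^'n"
  assumes C: "transpose C = C" and V: "subspace V" and invariant: "\<And>v. v \<in> V \<Longrightarrow> C *v v \<in> V"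
    and "V \<noteq> {0}"
  obtains u l where "u \<in> V" "norm u = 1" "C *v u = l *\<^sub>R u"
proof -
  define q where "q v = v \<bullet> (C *v v)" for v
  define K where "K = V \<inter> sphere 0 1"
  have "compact K"
    unfolding K_def using V by (intro closed_Int_compact closed_subspace compact_sphere)
  moreover have normalize: "v /\<^sub>R norm v \<in> K" if "v \<in> V" "v \<noteq> 0" for v
    using that V by (simp add: K_def subspace_scale)
  then have "K \<noteq> {}"
    using \<open>V \<noteq> {0}\<close> subspace_0[OF V] by blast
  moreover have "continuous_on K q"
    unfolding q_def by (intro continuous_intros)
  ultimately obtain u where "u \<in> K" and u_max: "\<And>y. y \<in> K \<Longrightarrow> q y \<le> q u"
    using continuous_attains_sup[of K q] by blast
  then have "u \<in> V" "norm u = 1" "u \<bullet> u = 1"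
    by (auto simp: K_def norm_eq_1)
  have "q w \<le> q u * (w \<bullet> w)" if "w \<in> V" for w
  proof (cases "w = 0")
    case False
    then have "q (w /\<^sub>R norm w) \<le> q u"
      using u_max normalize \<open>w \<in> V\<close> by simp
    moreover have "q (w /\<^sub>R norm w) = q w / (w \<bullet> w)"
      by (simp add: q_def matrix_vector_mult_scaleR power2_norm_eq_inner [symmetric] power2_eq_square
          divide_inverse)
    ultimately show ?thesis
      using False by (simp add: divide_le_eq mult.commute)
  qed (simp add: q_def)
  then have "C *v u = q u *\<^sub>R u"
    unfolding q_def using \<open>u \<in> V\<close> \<open>u \<bullet> u = 1\<close>
    by (intro symmetric_matrix_Rayleigh_maximizer_eigenvector[OF C V invariant]) auto
  with \<open>u \<in> V\<close> \<open>norm u = 1\<close> show ?thesis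
    by (rule that)
qed

lemma symmetric_matrix_eigenvector_orthogonal_complement:
  fixes C :: "real^'n^'n"
  assumes C: "transpose C = C" and V: "subspace V" and invariant: "\<And>v. v \<in> V \<Longrightarrow> C *v v \<in> V"
    and "u \<in> V" "norm u = 1" "C *v u = l *\<^sub>R u"
  defines "W \<equiv> {w \<in> V. orthogonal u w}"
  shows "subspace W" "\<And>w. w \<in> W \<Longrightarrow> C *v w \<in> W" "Suc (dim W) = dim V"
proof -
  show "subspace W"
    unfolding W_def using V subspace_orthogonal_to_vector[of u]
    by (metis (no_types) Collect_conj_eq Collect_mem_eq subspace_inter)
  show "C *v w \<in> W" if "w \<in> W" for w
    using that invariant symmetric_matrix_inner_commute[OF C, of u w] \<open>C *v u = l *\<^sub>R u\<close>
    by (auto simp: W_def orthogonal_def)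
  have "W = {w \<in> V. \<forall>x \<in> span {u}. orthogonal x w}"
    by (auto simp: W_def span_singleton orthogonal_def)
  also have "dim \<dots> + dim (span {u}) = dim V"
    using V \<open>u \<in> V\<close> by (intro dim_subspace_orthogonal_to_vectors subspace_span span_minimal) auto
  finally have "dim W + dim (span {u}) = dim V" .
  moreover have "u \<noteq> 0"
    using \<open>norm u = 1\<close> by auto
  ultimately show "Suc (dim W) = dim V"
    by (simp add: dim_insert)
qed

lemma symmetric_matrix_orthonormal_eigenvectors:
  fixes C :: "real^'n^'n"
  assumes C: "transpose C = C" and "subspace V" and "\<And>v. v \<in> V \<Longrightarrow> C *v v \<in> V"
  obtains B where "B \<subseteq> V" "finite B" "card B = dim V" "pairwise orthogonal B"
    "\<And>u. u \<in> B \<Longrightarrow> norm u = 1 \<and> (\<exists>l. C *v u = l *\<^sub>R u)"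
proof -
  have "\<exists>B \<subseteq> V. finite B \<and> card B = n \<and> pairwise orthogonal B \<and>
          (\<forall>u\<in>B. norm u = 1 \<and> (\<exists>l. C *v u = l *\<^sub>R u))"
    if "dim V = n" "subspace V" "\<And>v. v \<in> V \<Longrightarrow> C *v v \<in> V" for n V
    using that
  proof (induction n arbitrary: V)
    case 0
    then show ?case
      by (intro exI[of _ "{}"]) auto
  next
    case (Suc n)
    then have "V \<noteq> {0}"
      by auto
    with C Suc.prems(2,3) obtain u l where u: "u \<in> V" "norm u = 1" "C *v u = l *\<^sub>R u"
      by (rule symmetric_matrix_unit_eigenvector)
    note W = symmetric_matrix_eigenvector_orthogonal_complement[OF C Suc.prems(2,3) u]
    obtain B where B: "B \<subseteq> {w \<in> V. orthogonal u w}" "finite B" "card B = n" "pairwise orthogonal B"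
      "\<forall>u\<in>B. norm u = 1 \<and> (\<exists>l. C *v u = l *\<^sub>R u)"
      using Suc.IH[OF _ W(1,2)] W(3) Suc.prems(1) by auto
    have "u \<notin> B"
      using B(1) \<open>norm u = 1\<close> by (auto simp: orthogonal_def)
    then have "insert u B \<subseteq> V \<and> finite (insert u B) \<and> card (insert u B) = Suc n \<and>
        pairwise orthogonal (insert u B) \<and> (\<forall>v\<in>insert u B. norm v = 1 \<and> (\<exists>l. C *v v = l *\<^sub>R v))"
      using B u by (auto simp: pairwise_insert orthogonal_commute)
    then show ?case
      by blast
  qed
  from this[OF refl assms(2,3)] that show ?thesis
    by blast
qed

lemma symmetric_matrix_orthogonal_eigenbasis:
  fixes C :: "real^'n^'n"
  assumes C: "transpose C = C"
  obtains Q :: "real^'n^'n" and l :: "'n \<Rightarrow> real"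
  where "orthogonal_matrix Q" "\<And>j. C *v column j Q = l j *\<^sub>R column j Q"
proof -
  obtain B where B: "finite B" "card B = CARD('n)" "pairwise orthogonal B"
    "\<And>u. u \<in> B \<Longrightarrow> norm u = 1 \<and> (\<exists>l. C *v u = l *\<^sub>R u)"
    using symmetric_matrix_orthonormal_eigenvectors[OF C subspace_UNIV] by auto
  obtain g where g: "bij_betw g (UNIV :: 'n set) B"
    using B(1,2) finite_same_card_bij[of "UNIV :: 'n set" B] by auto
  then have "g j \<in> B" for j
    by (auto simp: bij_betw_def)
  then have "\<forall>j. \<exists>l. C *v g j = l *\<^sub>R g j"
    using B(4) by blast
  then obtain l where l: "\<forall>j. C *v g j = l j *\<^sub>R g j"
    by metis
  define Q :: "real^'n^'n" where "Q = (\<chi> i j. g j $ i)"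
  have column_Q: "column j Q = g j" for j
    by (simp add: Q_def column_def vec_eq_iff)
  have "orthogonal (g i) (g j)" if "i \<noteq> j" for i j
    using B(3) \<open>\<And>j. g j \<in> B\<close> bij_betw_imp_inj_on[OF g] that
    unfolding pairwise_def inj_on_def by blast
  then have "orthogonal_matrix Q"
    using B(4) \<open>\<And>j. g j \<in> B\<close> by (simp add: orthogonal_matrix_orthonormal_columns column_Q)
  then show ?thesis
    using that[of Q l] l by (simp add: column_Q)
qed

lemma symmetric_matrix_diagonalization:
  fixes C :: "real^'n^'n"
  assumes C: "transpose C = C"
  obtains Q :: "real^'n^'n" and l :: "'n \<Rightarrow> real"
  where "orthogonal_matrix Q" "C = Q ** (\<chi> i j. if i = j then l i else 0) ** transpose Q"
    "\<And>j. l j = column j Q \<bullet> (C *v column j Q)"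
proof -
  obtain Q :: "real^'n^'n" and l where Q: "orthogonal_matrix Q"
    and eigen: "\<And>j. C *v column j Q = l j *\<^sub>R column j Q"
    using symmetric_matrix_orthogonal_eigenbasis[OF C] by blast
  have "C ** Q = Q ** (\<chi> i j. if i = j then l i else 0)"
    using eigen by (simp add: vec_eq_iff matrix_matrix_mult_def matrix_vector_mult_def column_def
        if_distrib[of "\<lambda>x. _ * x"] mult.commute cong: if_cong)
  then have "C = Q ** (\<chi> i j. if i = j then l i else 0) ** transpose Q"
    using Q unfolding orthogonal_matrix_def by (metis matrix_mul_assoc matrix_mul_rid)
  moreover have "l j = column j Q \<bullet> (C *v column j Q)" for j
    using Q by (simp add: eigen orthogonal_matrix_orthonormal_columns norm_eq_1)
  ultimately show ?thesis
    by (rule that[OF Q])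
qed

lemma
  fixes C :: "real^'n^'n"
  assumes C: "transpose C = C" and psd: "\<And>v. 0 \<le> v \<bullet> (C *v v)"
  shows det_nonneg_if_psd: "0 \<le> det C"
    and det_le_trace_power: "det C \<le> (trace C / CARD('n)) ^ CARD('n)"
    and det_eq_trace_power_imp_scalar: "det C = (trace C / CARD('n)) ^ CARD('n) \<Longrightarrow> C = mat (trace C / CARD('n))"
proof -
  obtain Q :: "real^'n^'n" and l where Q: "orthogonal_matrix Q"
    and C_eq: "C = Q ** (\<chi> i j. if i = j then l i else 0) ** transpose Q"
    and l: "\<And>j. l j = column j Q \<bullet> (C *v column j Q)"
    using symmetric_matrix_diagonalization[OF C] by blast
  define D :: "real^'n^'n" where "D = (\<chi> i j. if i = j then l i else 0)"
  have "l j \<ge> 0" for j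
    by (simp add: l psd)
  have det_C: "det C = (\<Prod>j\<in>UNIV. l j)"
    using C_eq det_orthogonal_matrix[OF Q] by (auto simp: det_mul det_diagonal)
  have "trace C = trace (Q ** (D ** transpose Q))"
    by (simp add: C_eq D_def matrix_mul_assoc)
  also have "\<dots> = trace ((D ** transpose Q) ** Q)"
    by (rule trace_mul_sym)
  also have "\<dots> = trace (D ** (transpose Q ** Q))"
    by (simp add: matrix_mul_assoc)
  finally have trace_C: "trace C = (\<Sum>j\<in>UNIV. l j)"
    using Q by (simp add: orthogonal_matrix_def trace_def D_def)
  show "0 \<le> det C"
    using \<open>\<And>j. l j \<ge> 0\<close> by (simp add: det_C prod_nonneg)
  show "det C \<le> (trace C / CARD('n)) ^ CARD('n)"
    using prod_le_mean_power[of UNIV l] \<open>\<And>j. l j \<ge> 0\<close> by (simp add: det_C trace_C)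
  assume "det C = (trace C / CARD('n)) ^ CARD('n)"
  then have "(\<Prod>j\<in>UNIV. l j) = ((\<Sum>j\<in>UNIV. l j) / card (UNIV :: 'n set)) ^ card (UNIV :: 'n set)"
    by (simp add: det_C trace_C)
  then have "l j = trace C / CARD('n)" for j
    unfolding trace_C using \<open>\<And>j. l j \<ge> 0\<close> by (intro prod_eq_mean_power_imp_const) auto
  then have "D = mat (trace C / CARD('n))"
    by (simp add: D_def mat_def vec_eq_iff)
  moreover have "Q ** mat c = mat c ** Q" for c
    by (simp add: vec_eq_iff matrix_matrix_mult_def mat_def if_distrib[of "\<lambda>x. _ * x"]
        if_distrib[of "\<lambda>x. x * _"] mult.commute cong: if_cong)
  ultimately show "C = mat (trace C / CARD('n))"
    using C_eq Q unfolding orthogonal_matrix_def D_def[symmetric] by (metis matrix_mul_assoc matrix_mul_rid)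
qed

section \<open>Covariance matrices\<close>

lemma borel_measurable_sets_borel:
  assumes "sets M = sets borel" "f \<in> borel_measurable borel"
  shows "f \<in> borel_measurable M"
  using assms measurable_cong_sets[OF assms(1) refl] by blast

lemma P_star_iff:
  "\<mu> \<in> P_star \<longleftrightarrow> prob_space \<mu> \<and> sets \<mu> = sets borel \<and>
     integrable \<mu> (\<lambda>x. (norm x)\<^sup>2) \<and> (\<integral>x. (norm x)\<^sup>2 \<partial>\<mu>) = 1"
proof -
  have "(\<integral>\<^sup>+x. ennreal ((norm x)\<^sup>2) \<partial>\<mu>) = ennreal 1 \<longleftrightarrow>
      integrable \<mu> (\<lambda>x. (norm x)\<^sup>2) \<and> (\<integral>x. (norm x)\<^sup>2 \<partial>\<mu>) = 1" if "sets \<mu> = sets borel"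
    using that by (intro nn_integral_eq_integrable) (auto intro: borel_measurable_sets_borel)
  then show ?thesis
    unfolding P_star_def by auto
qed

lemma
  fixes \<mu> :: "(real^'n) measure"
  assumes "finite_measure \<mu>" "sets \<mu> = sets borel" and square_integrable: "integrable \<mu> (\<lambda>x. (norm x)\<^sup>2)"
  shows integrable_component_mult: "integrable \<mu> (\<lambda>x. x $ i * x $ j)"
    and integrable_ident: "integrable \<mu> (\<lambda>x. x)"
    and integrable_component: "integrable \<mu> (\<lambda>x. x $ i)"
proof -
  have "\<bar>x $ i * x $ j\<bar> \<le> (norm x)\<^sup>2" for x :: "real^'n"
    unfolding abs_mult power2_eq_square
    by (intro mult_mono component_le_norm_cart) auto
  then show "integrable \<mu> (\<lambda>x. x $ i * x $ j)"
    using assms(2) by (intro Bochner_Integration.integrable_bound[OF square_integrable])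
      (auto intro: borel_measurable_sets_borel)
  have "(\<lambda>x. norm x) \<in> borel_measurable \<mu>"
    by (rule borel_measurable_sets_borel[OF assms(2)]) simp
  then have "integrable \<mu> (\<lambda>x. norm x)"
    using finite_measure.square_integrable_imp_integrable[OF assms(1)] square_integrable by blast
  then show "integrable \<mu> (\<lambda>x. x)"
    using assms(2) by (subst integrable_norm_iff [symmetric]) (auto intro: borel_measurable_sets_borel)
  then show "integrable \<mu> (\<lambda>x. x $ i)"
    by (rule integrable_bounded_linear[OF bounded_linear_vec_nth])
qed

definition cov_mat :: "(real^'n) measure \<Rightarrow> real^'n^'n" where
  "cov_mat \<mu> = (\<chi> i j. (\<integral>x. x $ i * x $ j \<partial>\<mu>) - (\<integral>x. x $ i \<partial>\<mu>) * (\<integral>x. x $ j \<partial>\<mu>))"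

lemma transpose_cov_mat: "transpose (cov_mat \<mu>) = cov_mat \<mu>"
  by (simp add: cov_mat_def transpose_def vec_eq_iff mult.commute)

context
  fixes \<mu> :: "(real^'n) measure"
  assumes prob: "prob_space \<mu>" and sets: "sets \<mu> = sets borel"
    and square_integrable: "integrable \<mu> (\<lambda>x. (norm x)\<^sup>2)"
begin

interpretation prob_space \<mu>
  by (fact prob)

lemmas integrable_moments =
  integrable_component[OF finite_measure_axioms sets square_integrable]
  integrable_component_mult[OF finite_measure_axioms sets square_integrable]

lemma cov_mat_psd: "0 \<le> v \<bullet> (cov_mat \<mu> *v v)"
proof -
  define f where "f x = v \<bullet> x" for x :: "real^'n"
  have f_eq: "f x = (\<Sum>i\<in>UNIV. v $ i * x $ i)" for x
    by (simp add: f_def inner_vec_def)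
  have f_square_eq: "(f x)\<^sup>2 = (\<Sum>i\<in>UNIV. \<Sum>j\<in>UNIV. v $ i * v $ j * (x $ i * x $ j))" for x
    unfolding f_eq power2_eq_square sum_product by (intro sum.cong refl) (simp add: mult_ac)
  have "integrable \<mu> f" "integrable \<mu> (\<lambda>x. (f x)\<^sup>2)"
    unfolding f_square_eq unfolding f_eq using integrable_moments by auto
  have "expectation f = (\<Sum>i\<in>UNIV. v $ i * (\<integral>x. x $ i \<partial>\<mu>))"
    unfolding f_eq by (simp add: integrable_moments integral_sum)
  moreover have "expectation (\<lambda>x. (f x)\<^sup>2) = (\<Sum>i\<in>UNIV. \<Sum>j\<in>UNIV. v $ i * v $ j * (\<integral>x. x $ i * x $ j \<partial>\<mu>))"
    unfolding f_square_eq by (simp add: integrable_moments integral_sum)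
  ultimately have "v \<bullet> (cov_mat \<mu> *v v) = expectation (\<lambda>x. (f x)\<^sup>2) - (expectation f)\<^sup>2"
    by (simp add: power2_eq_square sum_product inner_vec_def matrix_vector_mult_def cov_mat_def
        sum_distrib_left algebra_simps sum_subtractf)
  also have "\<dots> = variance f"
    using variance_eq[OF \<open>integrable \<mu> f\<close> \<open>integrable \<mu> (\<lambda>x. (f x)\<^sup>2)\<close>] by simp
  finally show ?thesis
    by simp
qed

lemma trace_cov_mat: "trace (cov_mat \<mu>) = (\<integral>x. (norm x)\<^sup>2 \<partial>\<mu>) - (\<Sum>i\<in>UNIV. (\<integral>x. x $ i \<partial>\<mu>)\<^sup>2)"
proof -
  have "(\<integral>x. (norm x)\<^sup>2 \<partial>\<mu>) = (\<Sum>i\<in>UNIV. \<integral>x. x $ i * x $ i \<partial>\<mu>)"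
    by (simp add: power2_norm_eq_inner inner_vec_def integral_sum integrable_moments)
  then show ?thesis
    by (simp add: trace_def cov_mat_def sum_subtractf power2_eq_square)
qed

end

section \<open>The functional I_{A^2}\<close>

lemma ex_bij_betw_option_atMost:
  obtains c :: "'n::finite option \<Rightarrow> nat" where "bij_betw c UNIV {..CARD('n)}"
proof -
  have "card (UNIV :: 'n option set) = card {..CARD('n)}"
    by (simp add: UNIV_option_conv card_image)
  then show ?thesis
    using that finite_same_card_bij[of "UNIV :: 'n option set" "{..CARD('n)}"] by auto
qed

lemma simplex_vol_eq_det_homogeneous:
  fixes x :: "nat \<Rightarrow> real^'n"
  assumes c: "bij_betw c UNIV {..CARD('n)}"
  shows "simplex_vol x = \<bar>det (\<chi> i j. homogeneous (x (c j)) $ i)\<bar> / fact CARD('n)"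
proof -
  have "x ` {..CARD('n)} = x ` c ` UNIV"
    using bij_betw_imp_surj_on[OF c] by simp
  also have "\<dots> = insert (x (c None)) (range (\<lambda>j. x (c (Some j))))"
    by (simp add: UNIV_option_conv image_image)
  finally have vertices: "x ` {..CARD('n)} = insert (x (c None)) (range (\<lambda>j. x (c (Some j))))" .
  have "compact (convex hull (insert (x (c None)) (range (\<lambda>j. x (c (Some j))))))"
    by (intro finite_imp_compact_convex_hull) simp
  then have "simplex_vol x = measure lebesgue (convex hull (insert (x (c None)) (range (\<lambda>j. x (c (Some j))))))"
    unfolding simplex_vol_def vertices by (intro measure_completion [symmetric]) (auto dest: compact_imp_closed)
  also have "\<dots> = \<bar>det (\<chi> i j. homogeneous (x (c j)) $ i)\<bar> / fact CARD('n)"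
    by (simp add: measure_convex_hull_simplex det_homogeneous_columns)
  finally show ?thesis .
qed

lemma I_A2_eq_det_cov_mat:
  fixes \<mu> :: "(real^'n) measure"
  assumes "prob_space \<mu>" "sets \<mu> = sets borel" "integrable \<mu> (\<lambda>x. (norm x)\<^sup>2)"
  shows "I_A2 \<mu> = ennreal ((CARD('n) + 1) / fact CARD('n) * det (cov_mat \<mu>))"
proof -
  interpret prob_space \<mu> by fact
  obtain c :: "'n option \<Rightarrow> nat" where c: "bij_betw c UNIV {..CARD('n)}"
    by (rule ex_bij_betw_option_atMost)
  let ?D = "\<lambda>x. det (\<chi> i j. homogeneous (x (c j)) $ i)"
  let ?P = "PiM {..CARD('n)} (\<lambda>_. \<mu>)"
  have integrable_homogeneous: "integrable \<mu> (\<lambda>y. homogeneous y $ i * homogeneous y $ j)" for i j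
    using integrable_moments[OF assms] by (cases i; cases j) (simp_all add: homogeneous_def)
  note integral_D = integral_det_square_PiM[OF sigma_finite_measure_axioms c integrable_homogeneous]
  have "I_A2 \<mu> = (\<integral>\<^sup>+x. ennreal ((?D x)\<^sup>2 / (fact CARD('n))\<^sup>2) \<partial>?P)"
    unfolding I_A2_def by (simp add: simplex_vol_eq_det_homogeneous[OF c] power_divide)
  also have "\<dots> = ennreal ((\<integral>x. (?D x)\<^sup>2 \<partial>?P) / (fact CARD('n))\<^sup>2)"
    using integrable_det_square_PiM[OF sigma_finite_measure_axioms c integrable_homogeneous]
    by (subst nn_integral_eq_integral) auto
  also have "(\<integral>x. (?D x)\<^sup>2 \<partial>?P) = fact (CARD('n) + 1) * det (cov_mat \<mu>)"
  proof -
    have "det (\<chi> i j. \<integral>y. homogeneous y $ i * homogeneous y $ j \<partial>\<mu>) = det (cov_mat \<mu>)"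
      by (subst det_eq_Schur_complement_None) (simp_all add: homogeneous_def cov_mat_def prob_space)
    then show ?thesis
      using integral_D by simp
  qed
  also have "fact (CARD('n) + 1) * det (cov_mat \<mu>) / (fact CARD('n))\<^sup>2
      = (CARD('n) + 1) / fact CARD('n) * det (cov_mat \<mu>)"
    by (simp add: power2_eq_square field_simps)
  finally show ?thesis .
qed

lemma integral_ident_nth:
  fixes \<mu> :: "(real^'n) measure"
  assumes "integrable \<mu> (\<lambda>x. x)"
  shows "(\<integral>x. x \<partial>\<mu>) $ i = (\<integral>x. x $ i \<partial>\<mu>)"
  using integral_bounded_linear[OF bounded_linear_vec_nth assms, of i] by simp

context
  fixes \<nu> :: "(real^'n) measure"
  assumes "\<nu> \<in> P_star"
begin

lemma P_starD:
  shows "prob_space \<nu>" "sets \<nu> = sets borel" "integrable \<nu> (\<lambda>x. (norm x)\<^sup>2)" "(\<integral>x. (norm x)\<^sup>2 \<partial>\<nu>) = 1"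
  using \<open>\<nu> \<in> P_star\<close> by (auto simp: P_star_iff)

lemma cov_mat_psd_P_star: "0 \<le> v \<bullet> (cov_mat \<nu> *v v)"
  by (rule cov_mat_psd[OF P_starD(1-3)])

lemma trace_cov_mat_P_star: "trace (cov_mat \<nu>) = 1 - (\<Sum>i\<in>UNIV. (\<integral>x. x $ i \<partial>\<nu>)\<^sup>2)"
  using trace_cov_mat[OF P_starD(1-3)] P_starD(4) by simp

lemma trace_cov_mat_P_star_bounds: "0 \<le> trace (cov_mat \<nu>)" "trace (cov_mat \<nu>) \<le> 1"
proof -
  show "0 \<le> trace (cov_mat \<nu>)"
    unfolding trace_def using cov_mat_psd_P_star[of "axis _ 1"]
    by (intro sum_nonneg) (simp add: matrix_vector_mult_basis column_def inner_axis')
  show "trace (cov_mat \<nu>) \<le> 1"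
    by (simp add: trace_cov_mat_P_star sum_nonneg)
qed

lemma det_cov_mat_nonneg: "0 \<le> det (cov_mat \<nu>)"
  by (rule det_nonneg_if_psd[OF transpose_cov_mat cov_mat_psd_P_star])

lemma det_cov_mat_le: "det (cov_mat \<nu>) \<le> (1 / CARD('n)) ^ CARD('n)"
proof -
  have "det (cov_mat \<nu>) \<le> (trace (cov_mat \<nu>) / CARD('n)) ^ CARD('n)"
    by (rule det_le_trace_power[OF transpose_cov_mat cov_mat_psd_P_star])
  also have "\<dots> \<le> (1 / CARD('n)) ^ CARD('n)"
    using trace_cov_mat_P_star_bounds by (intro power_mono divide_right_mono) auto
  finally show ?thesis .
qed

lemma balanced_isotropic_iff_cov_mat:
  "balanced \<nu> \<and> isotropic \<nu> \<longleftrightarrow> (\<forall>i. (\<integral>x. x $ i \<partial>\<nu>) = 0) \<and> cov_mat \<nu> = mat (1 / CARD('n))"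
proof -
  note moments = integrable_moments[OF P_starD(1-3)]
    integrable_ident[OF prob_space.finite_measure[OF P_starD(1)] P_starD(2,3)]
  have "balanced \<nu> \<longleftrightarrow> (\<forall>i. (\<integral>x. x $ i \<partial>\<nu>) = 0)"
    using moments by (simp add: balanced_def vec_eq_iff integral_ident_nth)
  moreover have "isotropic \<nu> \<longleftrightarrow> cov_mat \<nu> = mat (1 / CARD('n))" if "\<forall>i. (\<integral>x. x $ i \<partial>\<nu>) = 0"
    using moments that by (simp add: isotropic_def cov_mat_def vec_eq_iff mat_def)
  ultimately show ?thesis
    by blast
qed

lemma det_cov_mat_eq_iff: "det (cov_mat \<nu>) = (1 / CARD('n)) ^ CARD('n) \<longleftrightarrow> balanced \<nu> \<and> isotropic \<nu>"
proof
  let ?C = "cov_mat \<nu>" and ?d = "real CARD('n)"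
  assume det_eq: "det ?C = (1 / ?d) ^ CARD('n)"
  note det_trace = det_le_trace_power det_eq_trace_power_imp_scalar
  note det_trace = det_trace[OF transpose_cov_mat cov_mat_psd_P_star]
  \<comment> \<open>equality forces \<open>trace C = 1\<close>, hence mean zero, and equality in AM-GM, hence \<open>C = I / d\<close>\<close>
  have "(1 / ?d) ^ CARD('n) \<le> (trace ?C / ?d) ^ CARD('n)"
    using det_trace(1) det_eq by simp
  then have "1 / ?d \<le> trace ?C / ?d"
    using trace_cov_mat_P_star_bounds by (subst (asm) power_mono_iff) auto
  then have "trace ?C = 1"
    using trace_cov_mat_P_star_bounds by (simp add: divide_le_cancel)
  then have "(\<Sum>i\<in>UNIV. (\<integral>x. x $ i \<partial>\<nu>)\<^sup>2) = 0"
    using trace_cov_mat_P_star by simp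
  then have "\<forall>i. (\<integral>x. x $ i \<partial>\<nu>) = 0"
    using sum_nonneg_eq_0_iff[of UNIV "\<lambda>i. (\<integral>x. x $ i \<partial>\<nu>)\<^sup>2"] by simp
  moreover have "?C = mat (1 / ?d)"
    using det_trace(2) det_eq \<open>trace ?C = 1\<close> by simp
  ultimately show "balanced \<nu> \<and> isotropic \<nu>"
    by (simp add: balanced_isotropic_iff_cov_mat)
next
  assume "balanced \<nu> \<and> isotropic \<nu>"
  then show "det (cov_mat \<nu>) = (1 / CARD('n)) ^ CARD('n)"
    by (simp add: balanced_isotropic_iff_cov_mat mat_def det_diagonal)
qed

end

lemma P_star_if_isotropic:
  fixes \<mu> :: "(real^'n) measure"
  assumes "prob_space \<mu>" "sets \<mu> = sets borel" "isotropic \<mu>"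
  shows "\<mu> \<in> P_star"
proof -
  have norm_square: "(norm x)\<^sup>2 = (\<Sum>i\<in>UNIV. x $ i * x $ i)" for x :: "real^'n"
    by (simp add: power2_norm_eq_inner inner_vec_def)
  have "integrable \<mu> (\<lambda>x. x $ i * x $ j)" "(\<integral>x. x $ i * x $ j \<partial>\<mu>) = (if i = j then 1 / CARD('n) else 0)" for i j
    using \<open>isotropic \<mu>\<close> by (auto simp: isotropic_def)
  then show ?thesis
    using assms(1,2) by (simp add: P_star_iff norm_square integral_sum)
qed

definition uniform_signed_basis :: "(real^'n) measure" where
  "uniform_signed_basis = distr (measure_pmf (pmf_of_set UNIV)) borel
     (\<lambda>(k, b). (if b then 1 else -1) *\<^sub>R axis k (1::real))"

lemma prob_space_uniform_signed_basis: "prob_space uniform_signed_basis"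
  unfolding uniform_signed_basis_def by (intro prob_space.prob_space_distr prob_space_measure_pmf) simp

lemma sets_uniform_signed_basis [simp]: "sets uniform_signed_basis = sets borel"
  by (simp add: uniform_signed_basis_def)

lemma
  fixes f :: "real^'n \<Rightarrow> real"
  assumes "f \<in> borel_measurable borel"
  shows integrable_uniform_signed_basis: "integrable uniform_signed_basis f"
    and integral_uniform_signed_basis:
      "(\<integral>x. f x \<partial>uniform_signed_basis) = (\<Sum>k\<in>UNIV. f (axis k 1) + f (- axis k 1)) / (2 * CARD('n))"
proof -
  let ?p = "pmf_of_set (UNIV :: ('n \<times> bool) set)"
  let ?g = "\<lambda>(k, b). (if b then 1 else -1) *\<^sub>R axis k (1::real) :: real^'n"
  have g: "?g \<in> measurable (measure_pmf ?p) borel"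
    by simp
  show "integrable uniform_signed_basis f"
    unfolding uniform_signed_basis_def using assms
    by (subst integrable_distr_eq[OF g]) (auto intro: integrable_measure_pmf_finite)
  have "(\<integral>x. f x \<partial>uniform_signed_basis) = (\<Sum>kb\<in>UNIV. f (?g kb)) / card (UNIV :: ('n \<times> bool) set)"
    unfolding uniform_signed_basis_def using assms by (simp add: integral_distr[OF g] integral_pmf_of_set)
  also have "(\<Sum>kb\<in>UNIV. f (?g kb)) = (\<Sum>k\<in>UNIV. \<Sum>b\<in>UNIV. f (?g (k, b)))"
    by (simp add: sum.cartesian_product prod.case_distrib flip: UNIV_Times_UNIV)
  also have "\<dots> = (\<Sum>k\<in>UNIV. f (axis k 1) + f (- axis k 1))"
    by (simp add: UNIV_bool add.commute)
  finally show "(\<integral>x. f x \<partial>uniform_signed_basis) = (\<Sum>k\<in>UNIV. f (axis k 1) + f (- axis k 1)) / (2 * CARD('n))"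
    by (simp add: card_UNIV_bool)
qed

lemma isotropic_uniform_signed_basis: "isotropic (uniform_signed_basis :: (real^'n) measure)"
  unfolding isotropic_def
proof (intro allI conjI)
  fix i j :: 'n
  show "integrable uniform_signed_basis (\<lambda>x. x $ i * x $ j)"
    by (rule integrable_uniform_signed_basis) simp
  have "(\<Sum>k\<in>UNIV. axis k 1 $ i * axis k 1 $ j) = (if i = j then 1 else (0::real))"
    by (simp add: axis_def if_distrib[of "\<lambda>x. x * _"] cong: if_cong)
  then show "(\<integral>x. x $ i * x $ j \<partial>uniform_signed_basis) = (if i = j then 1 / real CARD('n) else 0)"
    by (subst integral_uniform_signed_basis) (simp_all add: sum_distrib_left [symmetric])
qed

lemma balanced_uniform_signed_basis: "balanced (uniform_signed_basis :: (real^'n) measure)"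
proof -
  have "integrable uniform_signed_basis (\<lambda>x::real^'n. x)"
    unfolding uniform_signed_basis_def
    by (subst integrable_distr_eq) (auto intro: integrable_measure_pmf_finite)
  moreover have "(\<integral>x. x $ i \<partial>uniform_signed_basis) = 0" for i :: 'n
    by (subst integral_uniform_signed_basis) simp_all
  ultimately show ?thesis
    by (simp add: balanced_def vec_eq_iff integral_ident_nth)
qed

definition I_A2_max :: "nat \<Rightarrow> real" where
  "I_A2_max d = (d + 1) / fact d * (1 / d) ^ d"

lemma
  fixes \<nu> :: "(real^'n) measure"
  assumes "\<nu> \<in> P_star"
  shows I_A2_le_max: "I_A2 \<nu> \<le> ennreal (I_A2_max CARD('n))"
    and I_A2_eq_max_iff: "I_A2 \<nu> = ennreal (I_A2_max CARD('n)) \<longleftrightarrow> balanced \<nu> \<and> isotropic \<nu>"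
proof -
  define K :: real where "K = (CARD('n) + 1) / fact CARD('n)"
  have "K > 0"
    by (simp add: K_def add_pos_nonneg)
  have I_A2: "I_A2 \<nu> = ennreal (K * det (cov_mat \<nu>))"
    using assms by (simp add: P_star_iff I_A2_eq_det_cov_mat K_def)
  have max: "I_A2_max CARD('n) = K * (1 / CARD('n)) ^ CARD('n)"
    by (simp add: I_A2_max_def K_def)
  show "I_A2 \<nu> \<le> ennreal (I_A2_max CARD('n))"
    unfolding I_A2 max
    using det_cov_mat_le[OF assms] \<open>K > 0\<close> by (intro ennreal_leI mult_left_mono) auto
  have "I_A2 \<nu> = ennreal (I_A2_max CARD('n)) \<longleftrightarrow> det (cov_mat \<nu>) = (1 / CARD('n)) ^ CARD('n)"
    unfolding I_A2 max
    using det_cov_mat_nonneg[OF assms] \<open>K > 0\<close> by (subst ennreal_inj) auto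
  then show "I_A2 \<nu> = ennreal (I_A2_max CARD('n)) \<longleftrightarrow> balanced \<nu> \<and> isotropic \<nu>"
    using det_cov_mat_eq_iff[OF assms] by simp
qed

theorem theorem5p3:
  fixes \<mu> :: "(real^'n) measure"
  assumes "CARD('n) \<ge> 2"
    and "sets \<mu> = sets borel"
  shows "(\<mu> \<in> P_star \<and> (\<forall>\<nu>::(real^'n) measure\<in>P_star. I_A2 \<nu> \<le> I_A2 \<mu>))
         \<longleftrightarrow> (prob_space \<mu> \<and> balanced \<mu> \<and> isotropic \<mu>)"
proof
  assume maximizer: "\<mu> \<in> P_star \<and> (\<forall>\<nu>::(real^'n) measure\<in>P_star. I_A2 \<nu> \<le> I_A2 \<mu>)"
  have "(uniform_signed_basis :: (real^'n) measure) \<in> P_star"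
    by (simp add: P_star_if_isotropic prob_space_uniform_signed_basis isotropic_uniform_signed_basis)
  then have "ennreal (I_A2_max CARD('n)) \<le> I_A2 \<mu>"
    using maximizer balanced_uniform_signed_basis isotropic_uniform_signed_basis I_A2_eq_max_iff by metis
  then have "I_A2 \<mu> = ennreal (I_A2_max CARD('n))"
    using maximizer I_A2_le_max by (metis order_antisym)
  then show "prob_space \<mu> \<and> balanced \<mu> \<and> isotropic \<mu>"
    using maximizer I_A2_eq_max_iff by (auto simp: P_star_iff)
next
  assume "prob_space \<mu> \<and> balanced \<mu> \<and> isotropic \<mu>"
  then have "\<mu> \<in> P_star" "I_A2 \<mu> = ennreal (I_A2_max CARD('n))"
    using assms(2) P_star_if_isotropic I_A2_eq_max_iff by blast+
  then show "\<mu> \<in> P_star \<and> (\<forall>\<nu>::(real^'n) measure\<in>P_star. I_A2 \<nu> \<le> I_A2 \<mu>)"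
    using I_A2_le_max[where 'n = 'n] by simp
qed

end
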